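(* Let $F:\mathbf{Perf}(A)\to\mathbf{Perf}(A)$ be a fully faithful $k$-linear functor such that $F\circ[1]=[1]\circ F$ and $F(X_i[\alpha])=X_i[\alpha]$ for all $i\ge1$, $\alpha\in\mathbb{Z}$, and let $\delta_i\in k^*$ be defined by $F(\epsilon^i_{i[0]})=\delta_i\,\epsilon^i_{i[0]}$. Then $\delta_i$ does not depend on $i\ge1$.
   Context: $k$ is a field, $A=k[\epsilon]/(\epsilon^2)$, $\mathbf{Perf}(A)$ the homotopy category of bounded complexes of finitely generated free $A$-modules. For $i\ge1$, $X_i$ is the complex $0\to A\xrightarrow{\epsilon}\cdots\xrightarrow{\epsilon}A\to0$ with $A$ in degrees $-i,\dots,-1$, and $\epsilon^i_{i[0]}\in\mathrm{End}(X_i)$ is the homotopy class of the chain map that is multiplication by $\epsilon$ in degree $-1$ and $0$ elsewhere; $\mathrm{End}(X_i)$ has basis $\mathrm{id}_{X_i},\epsilon^i_{i[0]}$, and $F(\epsilon^i_{i[0]})$ is a nonzero multiple of $\epsilon^i_{i[0]}$. *)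

theory Defs
  imports Main "HOL-Library.Product_Plus"
begin

text \<open>An element a + b*eps of A is represented by the pair (a, b); addition is
componentwise (Product_Plus).\<close>

type_synonym 'k dn = "'k \<times> 'k"

definition dmul :: "'k::comm_ring_1 dn \<Rightarrow> 'k dn \<Rightarrow> 'k dn" where
  "dmul x y = (fst x * fst y, fst x * snd y + snd x * fst y)"

definition deps :: "'k::comm_ring_1 dn" where
  "deps = (0, 1)"

definition dscal :: "'k::comm_ring_1 \<Rightarrow> 'k dn" where
  "dscal c = (c, 0)"

type_synonym 'k mat = "nat \<Rightarrow> nat \<Rightarrow> 'k dn"

definition mat_in :: "nat \<Rightarrow> nat \<Rightarrow> 'k::comm_ring_1 mat \<Rightarrow> bool" where
  "mat_in nr nc M \<longleftrightarrow> (\<forall>r c. (nr \<le> r \<or> nc \<le> c) \<longrightarrow> M r c = 0)"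

definition mmul :: "nat \<Rightarrow> 'k::comm_ring_1 mat \<Rightarrow> 'k mat \<Rightarrow> 'k mat" where
  "mmul m M N = (\<lambda>r c. \<Sum>j<m. dmul (M r j) (N j c))"

text \<open>Degree n term is A^(rk n); the differential df n : A^(rk n) -> A^(rk (n+1)).\<close>
record 'k cpx =
  rk :: "int \<Rightarrow> nat"
  df :: "int \<Rightarrow> 'k mat"

definition is_perf :: "'k::comm_ring_1 cpx \<Rightarrow> bool" where
  "is_perf X \<longleftrightarrow> finite {n. rk X n \<noteq> 0}
     \<and> (\<forall>n. mat_in (rk X (n+1)) (rk X n) (df X n))
     \<and> (\<forall>n. mmul (rk X (n+1)) (df X (n+1)) (df X n) = (\<lambda>_ _. 0))"

type_synonym 'k cmap = "int \<Rightarrow> 'k mat"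

definition is_chain_map :: "'k::comm_ring_1 cpx \<Rightarrow> 'k cpx \<Rightarrow> 'k cmap \<Rightarrow> bool" where
  "is_chain_map X Y f \<longleftrightarrow> (\<forall>n. mat_in (rk Y n) (rk X n) (f n))
     \<and> (\<forall>n. mmul (rk Y n) (df Y n) (f n) = mmul (rk X (n+1)) (f (n+1)) (df X n))"

definition homotopic :: "'k::comm_ring_1 cpx \<Rightarrow> 'k cpx \<Rightarrow> 'k cmap \<Rightarrow> 'k cmap \<Rightarrow> bool" where
  "homotopic X Y f g \<longleftrightarrow> (\<exists>h::'k cmap. (\<forall>n. mat_in (rk Y (n-1)) (rk X n) (h n))
     \<and> (\<forall>n r c. f n r c - g n r c =
           mmul (rk Y (n-1)) (df Y (n-1)) (h n) r c + mmul (rk X (n+1)) (h (n+1)) (df X n) r c))"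

definition cm_comp :: "'k::comm_ring_1 cpx \<Rightarrow> 'k cmap \<Rightarrow> 'k cmap \<Rightarrow> 'k cmap" where
  "cm_comp Y g f = (\<lambda>n. mmul (rk Y n) (g n) (f n))"

definition cm_id :: "'k::comm_ring_1 cpx \<Rightarrow> 'k cmap" where
  "cm_id X = (\<lambda>n r c. if r = c \<and> r < rk X n then (1, 0) else 0)"

definition cm_add :: "'k::comm_ring_1 cmap \<Rightarrow> 'k cmap \<Rightarrow> 'k cmap" where
  "cm_add f g = (\<lambda>n r c. f n r c + g n r c)"

definition cm_smul :: "'k::comm_ring_1 \<Rightarrow> 'k cmap \<Rightarrow> 'k cmap" where
  "cm_smul a f = (\<lambda>n r c. dmul (dscal a) (f n r c))"

definition shift :: "'k::comm_ring_1 cpx \<Rightarrow> 'k cpx" where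
  "shift X = \<lparr>rk = (\<lambda>n. rk X (n+1)), df = (\<lambda>n r c. - df X (n+1) r c)\<rparr>"

definition shiftm :: "'k::comm_ring_1 cmap \<Rightarrow> 'k cmap" where
  "shiftm f = (\<lambda>n. f (n+1))"

text \<open>X[a] for an integer a (agrees with a-fold iterate of shift, or of its inverse).\<close>
definition shift_by :: "int \<Rightarrow> 'k::comm_ring_1 cpx \<Rightarrow> 'k cpx" where
  "shift_by a X = \<lparr>rk = (\<lambda>n. rk X (n+a)),
      df = (\<lambda>n r c. if even a then df X (n+a) r c else - df X (n+a) r c)\<rparr>"

definition Xc :: "nat \<Rightarrow> 'k::comm_ring_1 cpx" where
  "Xc i = \<lparr>rk = (\<lambda>n. if - int i \<le> n \<and> n \<le> -1 then 1 else 0),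
      df = (\<lambda>n r c. if - int i \<le> n \<and> n < -1 \<and> r = 0 \<and> c = 0 then deps else 0)\<rparr>"

definition eps_map :: "nat \<Rightarrow> 'k::comm_ring_1 cmap" where
  "eps_map i = (\<lambda>n r c. if n = -1 \<and> r = 0 \<and> c = 0 then deps else 0)"

text \<open>A functor on the homotopy category is given by an object map Fo and a map Fm
on chain-map representatives (Fm X Y f for f : X -> Y), compatible with homotopy,
identities and composition up to homotopy.\<close>
definition ff_klinear_functor ::
  "('k::field cpx \<Rightarrow> 'k cpx) \<Rightarrow> ('k cpx \<Rightarrow> 'k cpx \<Rightarrow> 'k cmap \<Rightarrow> 'k cmap) \<Rightarrow> bool" where
  "ff_klinear_functor Fo Fm \<longleftrightarrow>
     (\<forall>X. is_perf X \<longrightarrow> is_perf (Fo X))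
   \<and> (\<forall>X Y f. is_perf X \<and> is_perf Y \<and> is_chain_map X Y f \<longrightarrow> is_chain_map (Fo X) (Fo Y) (Fm X Y f))
   \<and> (\<forall>X Y f g. is_perf X \<and> is_perf Y \<and> is_chain_map X Y f \<and> is_chain_map X Y g \<and> homotopic X Y f g
        \<longrightarrow> homotopic (Fo X) (Fo Y) (Fm X Y f) (Fm X Y g))
   \<and> (\<forall>X. is_perf X \<longrightarrow> homotopic (Fo X) (Fo X) (Fm X X (cm_id X)) (cm_id (Fo X)))
   \<and> (\<forall>X Y Z f g. is_perf X \<and> is_perf Y \<and> is_perf Z \<and> is_chain_map X Y f \<and> is_chain_map Y Z g
        \<longrightarrow> homotopic (Fo X) (Fo Z) (Fm X Z (cm_comp Y g f)) (cm_comp (Fo Y) (Fm Y Z g) (Fm X Y f)))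
   \<and> (\<forall>X Y f g a. is_perf X \<and> is_perf Y \<and> is_chain_map X Y f \<and> is_chain_map X Y g
        \<longrightarrow> homotopic (Fo X) (Fo Y) (Fm X Y (cm_add (cm_smul a f) g))
                                   (cm_add (cm_smul a (Fm X Y f)) (Fm X Y g)))
   \<and> (\<forall>X Y g. is_perf X \<and> is_perf Y \<and> is_chain_map (Fo X) (Fo Y) g
        \<longrightarrow> (\<exists>f. is_chain_map X Y f \<and> homotopic (Fo X) (Fo Y) (Fm X Y f) g))
   \<and> (\<forall>X Y f g. is_perf X \<and> is_perf Y \<and> is_chain_map X Y f \<and> is_chain_map X Y g
        \<and> homotopic (Fo X) (Fo Y) (Fm X Y f) (Fm X Y g) \<longrightarrow> homotopic X Y f g)"

definition commutes_shift ::
  "('k::field cpx \<Rightarrow> 'k cpx) \<Rightarrow> ('k cpx \<Rightarrow> 'k cpx \<Rightarrow> 'k cmap \<Rightarrow> 'k cmap) \<Rightarrow> bool" where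
  "commutes_shift Fo Fm \<longleftrightarrow>
     (\<forall>X. is_perf X \<longrightarrow> Fo (shift X) = shift (Fo X))
   \<and> (\<forall>X Y f. is_perf X \<and> is_perf Y \<and> is_chain_map X Y f \<longrightarrow>
        homotopic (shift (Fo X)) (shift (Fo Y)) (Fm (shift X) (shift Y) (shiftm f)) (shiftm (Fm X Y f)))"

end

theory Submission
  imports Defs
begin

text \<open>On End(X_m) the alternating sum of the \<open>\<epsilon>\<close>-coefficients in degrees -1, ..., -m is
a trace: it is homotopy invariant, it reads off \<open>\<delta>\<close> from \<open>\<delta> \<epsilon>\<^sup>m\<close>, and for maps
G : X_i \<rightarrow> X_(i+1), K : X_(i+1) \<rightarrow> X_i it satisfies tr(K G) = tr(G K).
Now \<open>\<epsilon>\<^sup>i\<close> = \<open>\<epsilon>\<close> \<circ> \<iota> and \<open>\<epsilon>\<^sup>i\<^sup>+\<^sup>1\<close> = \<iota> \<circ> \<open>\<epsilon>\<close> for the inclusion \<iota> : X_i \<rightarrow> X_(i+1) and the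
map \<open>\<epsilon>\<close> : X_(i+1) \<rightarrow> X_i, so applying F and taking traces gives \<open>\<delta>\<^sub>i = \<delta>\<^sub>i\<^sub>+\<^sub>1\<close>.
Only F(X_i) = X_i and the compatibility of F with composition are needed.\<close>

lemma dmul_zero_left [simp]: "dmul 0 x = (0::'k::comm_ring_1 dn)"
  by (simp add: dmul_def zero_prod_def)

lemma dmul_zero_right [simp]: "dmul x 0 = (0::'k::comm_ring_1 dn)"
  by (simp add: dmul_def zero_prod_def)

lemma dmul_deps_deps [simp]: "dmul deps deps = (0::'k::comm_ring_1 dn)"
  by (simp add: dmul_def deps_def zero_prod_def)

lemma dmul_deps_one [simp]: "dmul deps (1, 0) = (deps::'k::comm_ring_1 dn)"
  by (simp add: dmul_def deps_def)

lemma dmul_one_deps [simp]: "dmul (1, 0) deps = (deps::'k::comm_ring_1 dn)"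
  by (simp add: dmul_def deps_def)

lemma snd_dmul_deps_left [simp]: "snd (dmul deps x) = fst (x::'k::comm_ring_1 dn)"
  by (simp add: dmul_def deps_def)

lemma snd_dmul_deps_right [simp]: "snd (dmul x deps) = fst (x::'k::comm_ring_1 dn)"
  by (simp add: dmul_def deps_def)

lemma dmul_commute: "dmul x (y::'k::comm_ring_1 dn) = dmul y x"
  by (simp add: dmul_def algebra_simps)

lemma mmul_if_one_zero:
  "mmul (if P then 1 else 0) M N = (if P then (\<lambda>r c. dmul (M r 0) (N 0 c)) else (\<lambda>_ _. 0))"
  by (auto simp: mmul_def)

lemma rk_Xc: "rk (Xc m) n = (if - int m \<le> n \<and> n \<le> -1 then 1 else 0)"
  by (simp add: Xc_def)

lemma df_Xc: "df (Xc m) n r c = (if - int m \<le> n \<and> n < -1 \<and> r = 0 \<and> c = 0 then deps else 0)"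
  by (simp add: Xc_def)

lemma is_perf_Xc: "is_perf (Xc m :: 'k::comm_ring_1 cpx)"
proof -
  have "{n. rk (Xc m :: 'k cpx) n \<noteq> 0} \<subseteq> {- int m..-1}"
    by (auto simp: rk_Xc split: if_splits)
  then have "finite {n. rk (Xc m :: 'k cpx) n \<noteq> 0}"
    by (rule finite_subset) simp
  moreover have "\<forall>n. mat_in (rk (Xc m :: 'k cpx) (n+1)) (rk (Xc m) n) (df (Xc m) n)"
    by (auto simp: mat_in_def rk_Xc df_Xc)
  moreover have "\<forall>n. mmul (rk (Xc m :: 'k cpx) (n+1)) (df (Xc m) (n+1)) (df (Xc m) n) = (\<lambda>_ _. 0)"
    by (auto simp: rk_Xc mmul_if_one_zero df_Xc intro!: ext)
  ultimately show ?thesis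
    by (simp add: is_perf_def)
qed

lemma shift_by_0 [simp]: "shift_by 0 X = X"
  by (simp add: shift_by_def)

lemma Fo_Xc:
  assumes "\<forall>i a. i \<ge> 1 \<longrightarrow> Fo (shift_by a (Xc i)) = shift_by a (Xc i)" and "i \<ge> 1"
  shows "Fo (Xc i) = Xc i"
  using assms shift_by_0 by metis

text \<open>The identity matrices of X_i represent the inclusion X_i \<rightarrow> X_(i+1) (X_i is the brutal
truncation of X_(i+1) in degrees \<open>\<ge>\<close> -i). Note that eps_map does not depend on its index.\<close>

lemma is_chain_map_inclusion_Xc:
  "i \<ge> 1 \<Longrightarrow> is_chain_map (Xc i) (Xc (Suc i)) (cm_id (Xc i :: 'k::comm_ring_1 cpx))"
  unfolding is_chain_map_def
  by (auto simp: mat_in_def rk_Xc df_Xc cm_id_def mmul_if_one_zero 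
      intro!: ext split: if_splits)

lemma is_chain_map_eps_map_Xc:
  "i \<ge> 1 \<Longrightarrow> is_chain_map (Xc (Suc i)) (Xc i) (eps_map j :: 'k::comm_ring_1 cmap)"
  unfolding is_chain_map_def
  by (auto simp: mat_in_def rk_Xc df_Xc eps_map_def mmul_if_one_zero 
      intro!: ext split: if_splits)

lemma eps_map_comp_inclusion:
  "i \<ge> 1 \<Longrightarrow> cm_comp (Xc (Suc i)) (eps_map j) (cm_id (Xc i)) = (eps_map i :: 'k::comm_ring_1 cmap)"
  by (auto simp: cm_comp_def rk_Xc cm_id_def eps_map_def mmul_if_one_zero 
      intro!: ext split: if_splits)

lemma inclusion_comp_eps_map:
  "i \<ge> 1 \<Longrightarrow> cm_comp (Xc i) (cm_id (Xc i)) (eps_map j) = (eps_map (Suc i) :: 'k::comm_ring_1 cmap)"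
  by (auto simp: cm_comp_def rk_Xc cm_id_def eps_map_def mmul_if_one_zero 
      intro!: ext split: if_splits)

definition eps_trace :: "nat \<Rightarrow> 'k::comm_ring_1 cmap \<Rightarrow> 'k" where
  "eps_trace m f = (\<Sum>k<m. (-1)^k * snd (f (- int k - 1) 0 0))"

lemma alternating_sum_telescope:
  fixes u :: "nat \<Rightarrow> 'k::comm_ring_1"
  shows "(\<Sum>k<m. (-1)^k * ((if k+2 \<le> m then u k else 0) + (if 1 \<le> k then u (k-1) else 0))) = 0"
proof (cases m)
  case (Suc p)
  have "(\<Sum>k<m. (-1)^k * (if k+2 \<le> m then u k else 0)) = (\<Sum>k<p. (-1)^k * u k)"
    using Suc by (simp add: sum.lessThan_Suc)
  moreover have "(\<Sum>k<m. (-1)^k * (if 1 \<le> k then u (k-1) else 0)) = - (\<Sum>k<p. (-1)^k * u k)"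
    using Suc by (simp only: sum.lessThan_Suc_shift) (simp add: sum_negf)
  ultimately show ?thesis
    by (simp add: distrib_left sum.distrib)
qed simp

text \<open>With h a homotopy and u_k the constant term of h in degree -k-1, the \<open>\<epsilon>\<close>-coefficient
of f - g in degree -k-1 is u_k + u_(k-1) (each term present only when in range), and these
cancel in the alternating sum.\<close>

lemma eps_trace_homotopic:
  assumes "homotopic (Xc m) (Xc m) f (g :: 'k::comm_ring_1 cmap)"
  shows "eps_trace m f = eps_trace m g"
proof -
  obtain h where h: "\<forall>n r c. f n r c - g n r c =
      mmul (rk (Xc m :: 'k cpx) (n-1)) (df (Xc m) (n-1)) (h n) r c
      + mmul (rk (Xc m :: 'k cpx) (n+1)) (h (n+1)) (df (Xc m) n) r c"
    using assms unfolding homotopic_def by blast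
  define u where "u k = fst (h (- int k - 1) 0 0)" for k
  have diff: "snd (f (- int k - 1) 0 0) - snd (g (- int k - 1) 0 0) =
      (if k+2 \<le> m then u k else 0) + (if 1 \<le> k then u (k-1) else 0)" if "k < m" for k
  proof -
    have shift_index: "1 \<le> k \<Longrightarrow> - int k - 1 + 1 = - int (k - 1) - 1"
      by simp
    have "snd (f (- int k - 1) 0 0) - snd (g (- int k - 1) 0 0)
        = snd (f (- int k - 1) 0 0 - g (- int k - 1) 0 0)"
      by simp
    also have "\<dots> = (if k+2 \<le> m then u k else 0) + (if 1 \<le> k then u (k-1) else 0)"
      using that h
      by (auto simp: rk_Xc df_Xc mmul_if_one_zero u_def shift_index)
    finally show ?thesis .
  qed
  have "eps_trace m f - eps_trace m g
      = (\<Sum>k<m. (-1)^k * (snd (f (- int k - 1) 0 0) - snd (g (- int k - 1) 0 0)))"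
    by (simp add: eps_trace_def sum_subtractf[symmetric] algebra_simps)
  also have "\<dots> = (\<Sum>k<m. (-1)^k * ((if k+2 \<le> m then u k else 0) + (if 1 \<le> k then u (k-1) else 0)))"
    by (rule sum.cong) (auto simp: diff)
  also have "\<dots> = 0"
    by (rule alternating_sum_telescope)
  finally show ?thesis
    by simp
qed

lemma eps_trace_smul_eps_map: "m \<ge> 1 \<Longrightarrow> eps_trace m (cm_smul d (eps_map j)) = (d::'k::comm_ring_1)"
  by (cases m) (simp_all only: eps_trace_def sum.lessThan_Suc_shift,
      simp_all add: cm_smul_def eps_map_def dscal_def dmul_def deps_def)

lemma eps_trace_comp_commute:
  "eps_trace i (cm_comp (Xc (Suc i)) K G) = eps_trace (Suc i) (cm_comp (Xc i) G (K :: 'k::comm_ring_1 cmap))"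
  unfolding eps_trace_def
  by (auto simp: sum.lessThan_Suc cm_comp_def rk_Xc mmul_if_one_zero dmul_commute intro!: sum.cong)

lemma eps_trace_Fm_eps_map_Suc:
  assumes F: "ff_klinear_functor Fo Fm"
    and i: "i \<ge> 1"
    and Fo_X: "Fo (Xc i) = Xc i" and Fo_Y: "Fo (Xc (Suc i)) = Xc (Suc i)"
  shows "eps_trace i (Fm (Xc i) (Xc i) (eps_map i :: 'k::field cmap))
       = eps_trace (Suc i) (Fm (Xc (Suc i)) (Xc (Suc i)) (eps_map (Suc i)))"
proof -
  let ?X = "Xc i :: 'k cpx" and ?Y = "Xc (Suc i) :: 'k cpx"
  let ?G = "Fm ?X ?Y (cm_id ?X)" and ?K = "Fm ?Y ?X (eps_map i)"
  have comp: "\<And>X Y Z f g. is_perf X \<Longrightarrow> is_perf Y \<Longrightarrow> is_perf Z \<Longrightarrow> is_chain_map X Y f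
      \<Longrightarrow> is_chain_map Y Z g
      \<Longrightarrow> homotopic (Fo X) (Fo Z) (Fm X Z (cm_comp Y g f)) (cm_comp (Fo Y) (Fm Y Z g) (Fm X Y f))"
    using F unfolding ff_klinear_functor_def by blast
  have "homotopic ?X ?X (Fm ?X ?X (eps_map i)) (cm_comp ?Y ?K ?G)"
    using comp[OF is_perf_Xc is_perf_Xc is_perf_Xc is_chain_map_inclusion_Xc[OF i]
        is_chain_map_eps_map_Xc[OF i], of i]
    by (simp add: eps_map_comp_inclusion[OF i] Fo_X Fo_Y)
  then have "eps_trace i (Fm ?X ?X (eps_map i)) = eps_trace i (cm_comp ?Y ?K ?G)"
    by (rule eps_trace_homotopic)
  also have "\<dots> = eps_trace (Suc i) (cm_comp ?X ?G ?K)"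
    by (rule eps_trace_comp_commute)
  also have "\<dots> = eps_trace (Suc i) (Fm ?Y ?Y (eps_map (Suc i)))"
  proof -
    have "homotopic ?Y ?Y (Fm ?Y ?Y (eps_map (Suc i))) (cm_comp ?X ?G ?K)"
      using comp[OF is_perf_Xc is_perf_Xc is_perf_Xc is_chain_map_eps_map_Xc[OF i]
          is_chain_map_inclusion_Xc[OF i], of i]
      by (simp add: inclusion_comp_eps_map[OF i] Fo_X Fo_Y)
    then show ?thesis
      by (simp add: eps_trace_homotopic)
  qed
  finally show ?thesis .
qed

theorem proposition5p6:
  fixes Fo :: "'k::field cpx \<Rightarrow> 'k cpx"
    and Fm :: "'k cpx \<Rightarrow> 'k cpx \<Rightarrow> 'k cmap \<Rightarrow> 'k cmap"
    and \<delta> :: "nat \<Rightarrow> 'k"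
  assumes "ff_klinear_functor Fo Fm"
    and "commutes_shift Fo Fm"
    and "\<forall>i a. i \<ge> 1 \<longrightarrow> Fo (shift_by a (Xc i)) = shift_by a (Xc i)"
    and "\<forall>i. i \<ge> 1 \<longrightarrow> \<delta> i \<noteq> 0 \<and>
           homotopic (Xc i) (Xc i) (Fm (Xc i) (Xc i) (eps_map i)) (cm_smul (\<delta> i) (eps_map i))"
  shows "\<forall>i j. i \<ge> 1 \<and> j \<ge> 1 \<longrightarrow> \<delta> i = \<delta> j"
proof -
  have \<delta>_eq: "\<delta> i = eps_trace i (Fm (Xc i) (Xc i) (eps_map i))" if "i \<ge> 1" for i
    using eps_trace_homotopic assms(4) that eps_trace_smul_eps_map by metis
  have \<delta>_Suc: "\<delta> (Suc i) = \<delta> i" if "i \<ge> 1" for i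
    using that eps_trace_Fm_eps_map_Suc[OF assms(1) that Fo_Xc[OF assms(3)] Fo_Xc[OF assms(3)]]
    by (simp add: \<delta>_eq)
  have "\<delta> j = \<delta> 1" if "j \<ge> 1" for j
    using that by (induction j rule: dec_induct) (simp_all add: \<delta>_Suc)
  then show ?thesis
    by metis
qed

end
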